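(* Let $n\ge2$ and $B_n=\langle a,b\mid ba=b^n\rangle$. 1. If $\mathsf d$ denotes the Levenshtein distance, then $\mathsf c_{\mathsf d}(B_n)=n-1$; and $B_n$ is half-factorial if and only if $n=2$. 2. For all $k,m\in\mathbb N_0$, \[\mathsf L(a^kb^m)=k+m-q_{m,n}(n-2)+(n-2)\cdot[0,q_{m,n}],\] where $q_{m,n}=\lfloor m/(n-1)\rfloor$ if $(n-1)\nmid m$; $q_{m,n}=\frac{m}{n-1}-1$ if $(n-1)\mid m$ and $m\neq0$; and $q_{m,n}=0$ if $m=0$.
   Context: $B_n$ is the monoid with generators $a,b$ and single relation $ba=b^n$; it is reduced and atomic with atoms $a,b$, and every element is uniquely $a^kb^m$ ($k,m\in\mathbb N_0$). Factorizations are words in the free monoid $\mathcal F^*(\{a,b\})$; $\pi$ maps a word to the element it represents; $\sim=\{(x,y)\mid\pi(x)=\pi(y)\}$. $\mathsf L(x)=\{|z|:\pi(z)=x\}$ (with $\mathsf L(1)=\{0\}$). The Levenshtein distance between words $z,z'$ is the minimal number of substitutions, deletions or insertions of single letters needed to transform $z$ into $z'$. For $x\in B_n$, the catenary degree $\mathsf c_{\mathsf d}(x)$ is the least $N\in\mathbb N_0\cup\{\infty\}$ such that any two factorizations $z,z'$ of $x$ are connected by a chain $z=z_0,\dots,z_r=z'$ of factorizations of $x$ with $\mathsf d(z_{i-1},z_i)\le N$; $\mathsf c_{\mathsf d}(B_n)=\sup_x\mathsf c_{\mathsf d}(x)$. Half-factorial: $|\mathsf L(x)|=1$ for all $x$.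 Notation: $[u,v]=\{z\in\mathbb Z:u\le z\le v\}$, $d\cdot L=\{dl:l\in L\}$, $m+L=\{m+l:l\in L\}$. *)

theory Defs
  imports Main "HOL-Library.Extended_Nat"
begin

datatype atom = a | b

inductive Bstep :: "nat \<Rightarrow> atom list \<Rightarrow> atom list \<Rightarrow> bool" for n where
  "Bstep n (u @ [b, a] @ v) (u @ replicate n b @ v)"

text \<open>The congruence on the free monoid generated by the relation: two words
  represent the same element of B_n (the relation \<sim>).\<close>
definition Bequiv :: "nat \<Rightarrow> atom list \<Rightarrow> atom list \<Rightarrow> bool" where
  "Bequiv n = (\<lambda>x y. Bstep n x y \<or> Bstep n y x)\<^sup>*\<^sup>*"

definition facts :: "nat \<Rightarrow> atom list \<Rightarrow> atom list set" where
  "facts n w = {z. Bequiv n z w}"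

definition Lset :: "nat \<Rightarrow> atom list \<Rightarrow> nat set" where
  "Lset n w = length ` facts n w"

definition edit1 :: "'x list \<Rightarrow> 'x list \<Rightarrow> bool" where
  "edit1 z z' \<longleftrightarrow> (\<exists>u v x y.
      (z = u @ [x] @ v \<and> z' = u @ [y] @ v) \<or>
      (z = u @ [x] @ v \<and> z' = u @ v) \<or>
      (z = u @ v \<and> z' = u @ [x] @ v))"

definition lev :: "'x list \<Rightarrow> 'x list \<Rightarrow> nat" where
  "lev z z' = (LEAST k. (edit1 ^^ k) z z')"

definition cat_deg :: "('x list \<Rightarrow> 'x list \<Rightarrow> nat) \<Rightarrow> 'x list set \<Rightarrow> enat" where
  "cat_deg d Z = Inf {N :: enat. \<forall>z\<in>Z. \<forall>z'\<in>Z. \<exists>zs. zs \<noteq> [] \<and> hd zs = z \<and> last zs = z' \<and>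
       set zs \<subseteq> Z \<and> (\<forall>i < length zs - 1. enat (d (zs ! i) (zs ! Suc i)) \<le> N)}"

text \<open>Catenary degree of B_n: supremum over all elements (every element is
  represented by some word).\<close>
definition cat_deg_B :: "nat \<Rightarrow> enat" where
  "cat_deg_B n = (SUP w. cat_deg lev (facts n w))"

definition half_factorial_B :: "nat \<Rightarrow> bool" where
  "half_factorial_B n \<longleftrightarrow> (\<forall>w. card (Lset n w) = 1)"

definition qmn :: "nat \<Rightarrow> nat \<Rightarrow> nat" where
  "qmn m n = (if m = 0 then 0
              else if (n - 1) dvd m then m div (n - 1) - 1
              else m div (n - 1))"

end

theory Submission
  imports Defs
begin

text \<open>Every word over \<open>a, b\<close> is equivalent to a unique word \<open>a\<^sup>k b\<^sup>m\<close>: behind the first \<open>b\<close>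
  the relation turns everything into \<open>b\<close>'s, each \<open>a\<close> there counting as \<open>n - 1\<close> of them.
  Hence the factorizations of \<open>a\<^sup>k b\<^sup>m\<close> are the words \<open>a\<^sup>k b w\<close> with
  \<open>m = 1 + |w|\<^sub>b + (n - 1) |w|\<^sub>a\<close>, of length \<open>k + m - (n - 2) |w|\<^sub>a\<close>, and \<open>|w|\<^sub>a\<close> ranges
  exactly over \<open>[0, qmn m n]\<close>.
  One application of \<open>b a \<rightarrow> b\<^sup>n\<close> is one substitution and \<open>n - 2\<close> insertions, so any two
  factorizations are joined by a chain of steps of Levenshtein distance at most \<open>n - 1\<close>.
  Conversely, \<open>b\<^sup>n\<close> has only factorizations with one or with \<open>n\<close> letters \<open>b\<close>, and every chain
  between them contains a step changing the number of \<open>b\<close>'s by \<open>n - 1\<close>.\<close>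

section \<open>Chains in an equivalence closure\<close>

lemma rtranclp_imp_chain:
  assumes "R\<^sup>*\<^sup>* x y"
  shows "\<exists>zs. zs \<noteq> [] \<and> hd zs = x \<and> last zs = y \<and> set zs \<subseteq> {v. R\<^sup>*\<^sup>* x v} \<and>
              (\<forall>i < length zs - 1. R (zs ! i) (zs ! Suc i))"
  using assms
proof (induction rule: converse_rtranclp_induct)
  case base
  show ?case by (intro exI[of _ "[y]"]) simp
next
  case (step x v)
  then obtain zs where zs: "zs \<noteq> []" "hd zs = v" "last zs = y" "set zs \<subseteq> {w. R\<^sup>*\<^sup>* v w}"
    "\<forall>i < length zs - 1. R (zs ! i) (zs ! Suc i)"
    by blast
  have "\<forall>i < length (x # zs) - 1. R ((x # zs) ! i) ((x # zs) ! Suc i)"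
  proof (intro allI impI)
    fix i assume "i < length (x # zs) - 1"
    with zs(1,2,5) step(1) show "R ((x # zs) ! i) ((x # zs) ! Suc i)"
      by (cases i) (auto simp: hd_conv_nth)
  qed
  moreover have "set (x # zs) \<subseteq> {w. R\<^sup>*\<^sup>* x w}"
    using zs(4) step(1) by auto
  ultimately show ?case
    using zs(1-3) by (intro exI[of _ "x # zs"]) simp
qed

lemma cat_deg_equivclp_class_le:
  assumes "\<And>x y. r x y \<Longrightarrow> d x y \<le> N" and "\<And>x y. d x y = d y x"
  shows "cat_deg d {z. equivclp r z w} \<le> enat N"
  unfolding cat_deg_def
proof (rule Inf_lower, safe)
  fix z z' assume "equivclp r z w" "equivclp r z' w"
  then have "(symclp r)\<^sup>*\<^sup>* z z'"
    unfolding equivclp_def[symmetric] by (meson equivclp_sym equivclp_trans)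
  from rtranclp_imp_chain[OF this] obtain zs where zs: "zs \<noteq> []" "hd zs = z" "last zs = z'"
      "set zs \<subseteq> {v. (symclp r)\<^sup>*\<^sup>* z v}" "\<forall>i < length zs - 1. symclp r (zs ! i) (zs ! Suc i)"
    by blast
  have "set zs \<subseteq> {v. equivclp r v w}"
    using zs(4) \<open>equivclp r z w\<close>
    unfolding equivclp_def[symmetric] by (auto intro: equivclp_trans equivclp_sym)
  moreover have "\<forall>i < length zs - 1. enat (d (zs ! i) (zs ! Suc i)) \<le> enat N"
  proof (intro allI impI)
    fix i assume "i < length zs - 1"
    with zs(5) have "symclp r (zs ! i) (zs ! Suc i)" by blast
    then show "enat (d (zs ! i) (zs ! Suc i)) \<le> enat N"
      by cases (use assms in \<open>metis enat_ord_simps(1)\<close>)+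
  qed
  ultimately show "\<exists>zs. zs \<noteq> [] \<and> hd zs = z \<and> last zs = z' \<and> set zs \<subseteq> {v. equivclp r v w} \<and>
                    (\<forall>i < length zs - 1. enat (d (zs ! i) (zs ! Suc i)) \<le> enat N)"
    using zs(1-3) by blast
qed

lemma ex_nth_in_nth_Suc_notin:
  assumes "zs \<noteq> []" "hd zs \<in> A" "last zs \<notin> A"
  shows "\<exists>i < length zs - 1. zs ! i \<in> A \<and> zs ! Suc i \<notin> A"
  using assms
proof (induction zs)
  case (Cons x zs)
  show ?case
  proof (cases "zs \<noteq> [] \<and> hd zs \<in> A")
    case True
    with Cons obtain i where "i < length zs - 1" "zs ! i \<in> A" "zs ! Suc i \<notin> A"
      by auto
    then show ?thesis by (intro exI[of _ "Suc i"]) auto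
  next
    case False
    with Cons.prems show ?thesis
      by (intro exI[of _ 0]) (cases zs; auto)
  qed
qed simp

section \<open>Levenshtein distance\<close>

lemma symp_relpowp: "symp R \<Longrightarrow> symp (R ^^ k)"
proof (induction k)
  case (Suc k)
  show ?case
  proof (rule sympI)
    fix x z assume "(R ^^ Suc k) x z"
    then obtain y where "(R ^^ k) x y" "R y z" by (rule relpowp_Suc_E)
    with Suc show "(R ^^ Suc k) z x"
      by (meson relpowp_Suc_I2 sympD)
  qed
qed (simp add: symp_def)

lemma symp_edit1: "symp edit1"
  unfolding symp_def edit1_def by blast

lemma lev_commute: "lev x y = lev y x"
proof -
  have "(edit1 ^^ k) x y \<longleftrightarrow> (edit1 ^^ k) y x" for k
    using symp_relpowp[OF symp_edit1] by (meson sympD)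
  then show ?thesis by (simp add: lev_def)
qed

lemma lev_le: "(edit1 ^^ k) x y \<Longrightarrow> lev x y \<le> k"
  unfolding lev_def by (rule Least_le)

lemma relpowp_edit1_Nil: "(edit1 ^^ length x) x []"
proof (induction x)
  case (Cons c x)
  have "edit1 (c # x) x"
    unfolding edit1_def by (metis append_Cons append_Nil)
  from relpowp_Suc_I2[OF this Cons.IH] show ?case by simp
qed simp

lemma relpowp_edit1_lev: "(edit1 ^^ lev x y) x y"
proof -
  have "(edit1 ^^ (length x + length y)) x y"
    using relpowp_edit1_Nil[of x] symp_relpowp[OF symp_edit1] relpowp_edit1_Nil[of y]
    by (auto simp: relpowp_add dest: sympD)
  then show ?thesis
    unfolding lev_def by (rule LeastI)
qed

lemma edit1_count_list_le: "edit1 x y \<Longrightarrow> count_list y c \<le> count_list x c + 1"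
  unfolding edit1_def by auto

lemma relpowp_edit1_count_list_le:
  "(edit1 ^^ k) x y \<Longrightarrow> count_list y c \<le> count_list x c + k"
proof (induction k arbitrary: y)
  case (Suc k)
  from Suc.prems obtain z where "(edit1 ^^ k) x z" "edit1 z y" by (rule relpowp_Suc_E)
  with Suc.IH[of z] edit1_count_list_le[of z y c] show ?case
    by simp
qed simp

lemma count_list_le_lev: "count_list y c \<le> count_list x c + lev x y"
  using relpowp_edit1_count_list_le[OF relpowp_edit1_lev] .

lemma relpowp_edit1_replace_by_replicate:
  "(edit1 ^^ Suc j) (u @ [x] @ v) (u @ replicate (Suc j) y @ v)"
proof (induction j)
  case 0
  have "edit1 (u @ [x] @ v) (u @ [y] @ v)"
    unfolding edit1_def by blast
  then show ?case by (simp only: relpowp_Suc_0 replicate_Suc replicate_0)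
next
  case (Suc j)
  have "edit1 (u @ replicate (Suc j) y @ v) (u @ [y] @ replicate (Suc j) y @ v)"
    unfolding edit1_def by blast
  from relpowp_Suc_I[OF Suc this] show ?case by simp
qed

section \<open>Normal forms in \<open>B\<^sub>n\<close>\<close>

lemma Bequiv_eq_equivclp: "Bequiv n = equivclp (Bstep n)"
  unfolding Bequiv_def equivclp_def symclp_def[abs_def] ..

lemma count_list_replicate [simp]:
  "count_list (replicate k x) y = (if x = y then k else 0)"
  by (induction k) auto

lemma length_eq_count_a_plus_count_b: "length w = count_list w a + count_list w b"
proof (induction w)
  case (Cons x w)
  then show ?case by (cases x) auto
qed simp

lemma atom_word_cases: "(\<exists>j. w = replicate j a) \<or> (\<exists>j v. w = replicate j a @ b # v)"
proof (induction w)
  case (Cons x w)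
  then show ?case
    by (cases x) (metis append_Cons replicate_Suc, metis append_Nil replicate_0)
qed (metis replicate_0)

text \<open>\<open>nf n w = (k, m)\<close> when \<open>w\<close> represents \<open>a\<^sup>k b\<^sup>m\<close>.\<close>

fun nf :: "nat \<Rightarrow> atom list \<Rightarrow> nat \<times> nat" where
  "nf n [] = (0, 0)"
| "nf n (a # w) = (Suc (fst (nf n w)), snd (nf n w))"
| "nf n (b # w) = (0, 1 + count_list w b + (n - 1) * count_list w a)"

lemma nf_replicate_a_append:
  "nf n (replicate j a @ w) = (j + fst (nf n w), snd (nf n w))"
  by (induction j) auto

lemma nf_replicate_a: "nf n (replicate j a) = (j, 0)"
  using nf_replicate_a_append[of n j "[]"] by simp

lemma nf_replicate_a_b_Cons:
  "nf n (replicate j a @ b # w) = (j, 1 + count_list w b + (n - 1) * count_list w a)"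
  by (simp add: nf_replicate_a_append)

lemma nf_canonical: "nf n (replicate k a @ replicate m b) = (k, m)"
  by (cases m) (simp_all add: nf_replicate_a nf_replicate_a_b_Cons)

lemma nf_Bstep: "Bstep n x y \<Longrightarrow> n \<ge> 1 \<Longrightarrow> nf n x = nf n y"
proof (induction rule: Bstep.induct)
  case (1 u v)
  then obtain r where r: "n = Suc r" by (cases n) auto
  show ?case
  proof (induction u)
    case (Cons x u)
    then show ?case by (cases x) (auto simp: r)
  qed (simp add: r)
qed

lemma Bequiv_collapse_after_b:
  assumes "n \<ge> 1" "p \<ge> 1"
  shows "Bequiv n (u @ replicate p b @ w)
                  (u @ replicate (p + count_list w b + (n - 1) * count_list w a) b)"
  using assms(2)
proof (induction w arbitrary: p)
  case (Cons x w)
  show ?case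
  proof (cases x)
    case a
    obtain q where q: "p = Suc q" using Cons.prems by (cases p) auto
    have "Bstep n ((u @ replicate q b) @ [b, a] @ w) ((u @ replicate q b) @ replicate n b @ w)"
      by (rule Bstep.intros)
    moreover have "u @ replicate p b @ a # w = (u @ replicate q b) @ [b, a] @ w"
      using q by (simp add: replicate_app_Cons_same)
    moreover have "u @ replicate (p + (n - 1)) b @ w = (u @ replicate q b) @ replicate n b @ w"
      using q assms(1) by (simp add: replicate_add)
    ultimately have "Bequiv n (u @ replicate p b @ a # w) (u @ replicate (p + (n - 1)) b @ w)"
      by (auto simp: Bequiv_eq_equivclp)
    moreover have "Bequiv n (u @ replicate (p + (n - 1)) b @ w)
        (u @ replicate (p + (n - 1) + count_list w b + (n - 1) * count_list w a) b)"
      using Cons.IH Cons.prems by simp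
    moreover have "p + count_list (a # w) b + (n - 1) * count_list (a # w) a
        = p + (n - 1) + count_list w b + (n - 1) * count_list w a"
      by simp
    ultimately show ?thesis
      unfolding a Bequiv_eq_equivclp by (metis equivclp_trans)
  next
    case b
    with Cons.IH[of "Suc p"] show ?thesis
      by (simp add: replicate_app_Cons_same)
  qed
qed (simp add: Bequiv_eq_equivclp)

lemma Bequiv_canonical:
  assumes "n \<ge> 1"
  shows "Bequiv n w (replicate (fst (nf n w)) a @ replicate (snd (nf n w)) b)"
  using atom_word_cases[of w]
proof (elim disjE exE)
  fix j assume "w = replicate j a"
  then show ?thesis by (simp add: nf_replicate_a Bequiv_eq_equivclp)
next
  fix j v assume "w = replicate j a @ b # v"
  then show ?thesis
    using Bequiv_collapse_after_b[OF assms, of 1 "replicate j a" v]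
    by (simp add: nf_replicate_a_b_Cons)
qed

lemma Bequiv_iff_nf_eq:
  assumes "n \<ge> 1"
  shows "Bequiv n x y \<longleftrightarrow> nf n x = nf n y"
proof
  assume "Bequiv n x y"
  then show "nf n x = nf n y"
    unfolding Bequiv_eq_equivclp by induction (auto dest: nf_Bstep[OF _ assms])
next
  assume "nf n x = nf n y"
  then show "Bequiv n x y"
    using Bequiv_canonical[OF assms, of x] Bequiv_canonical[OF assms, of y]
    by (auto simp: Bequiv_eq_equivclp elim: equivclp_trans dest: equivclp_sym)
qed

lemma facts_eq_nf: "n \<ge> 1 \<Longrightarrow> facts n w = {z. nf n z = nf n w}"
  by (simp add: facts_def Bequiv_iff_nf_eq)

section \<open>Sets of lengths\<close>

lemma qmn_ge_iff:
  assumes "n \<ge> 2" "m > 0"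
  shows "\<alpha> \<le> qmn m n \<longleftrightarrow> (n - 1) * \<alpha> < m"
proof (cases "(n - 1) dvd m")
  case True
  then obtain c where c: "m = (n - 1) * c" by blast
  with assms have "c \<ge> 1" by (cases c) auto
  with assms c show ?thesis by (simp add: qmn_def) linarith
next
  case False
  then have "(n - 1) * \<alpha> \<noteq> m" by auto
  with assms False show ?thesis
    by (auto simp: qmn_def less_eq_div_iff_mult_less_eq mult.commute)
qed

lemma length_replicate_a_b_Cons:
  assumes "n \<ge> 2"
  shows "length (replicate j a @ b # v) + (n - 2) * count_list v a
           = j + snd (nf n (replicate j a @ b # v))"
proof -
  from assms obtain r where "n = Suc (Suc r)"
    by (metis add_2_eq_Suc le_Suc_ex)
  then have "(n - 2) * count_list v a + count_list v a = (n - 1) * count_list v a"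
    by simp
  then show ?thesis
    by (simp add: nf_replicate_a_b_Cons length_eq_count_a_plus_count_b[of v])
qed

lemma Lset_canonical:
  assumes "n \<ge> 2"
  shows "Lset n (replicate k a @ replicate m b) = (\<lambda>\<alpha>. k + m - (n - 2) * \<alpha>) ` {..qmn m n}"
    (is "_ = ?L")
proof -
  have Lset_eq: "Lset n (replicate k a @ replicate m b) = length ` {z. nf n z = (k, m)}"
    using assms by (simp add: Lset_def facts_eq_nf nf_canonical)
  have "length z \<in> ?L" if z: "nf n z = (k, m)" for z
    using atom_word_cases[of z]
  proof (elim disjE exE)
    fix j assume "z = replicate j a"
    with z show ?thesis by (force simp: nf_replicate_a)
  next
    fix j v assume zv: "z = replicate j a @ b # v"
    with z have m: "m = 1 + count_list v b + (n - 1) * count_list v a" and "j = k"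
      by (simp_all add: nf_replicate_a_b_Cons)
    then have "length z = k + m - (n - 2) * count_list v a"
      using length_replicate_a_b_Cons[OF assms, of j v] z zv by simp
    moreover have "count_list v a \<le> qmn m n"
      using qmn_ge_iff[OF assms] m by simp
    ultimately show ?thesis by auto
  qed
  moreover have "k + m - (n - 2) * \<alpha> \<in> length ` {z. nf n z = (k, m)}"
    if "\<alpha> \<le> qmn m n" for \<alpha>
  proof (cases "m = 0")
    case True
    with that have "\<alpha> = 0" by (simp add: qmn_def)
    with True show ?thesis
      by (auto intro!: image_eqI[of _ _ "replicate k a"] simp: nf_replicate_a)
  next
    case False
    with that qmn_ge_iff[OF assms] have lt: "(n - 1) * \<alpha> < m" by simp
    define z where "z = replicate k a @ b # (replicate \<alpha> a @ replicate (m - 1 - (n - 1) * \<alpha>) b)"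
    have "nf n z = (k, m)"
      using lt by (simp add: z_def nf_replicate_a_b_Cons)
    moreover have "length z = k + m - (n - 2) * \<alpha>"
      using length_replicate_a_b_Cons[OF assms, of k "replicate \<alpha> a @ replicate (m - 1 - (n - 1) * \<alpha>) b"]
        \<open>nf n z = (k, m)\<close>
      unfolding z_def[symmetric] by simp
    ultimately show ?thesis
      by (intro image_eqI[of _ length z]) simp_all
  qed
  ultimately show ?thesis
    unfolding Lset_eq by blast
qed

lemma Lset_eq_Lset_canonical:
  assumes "n \<ge> 1"
  shows "Lset n w = Lset n (replicate (fst (nf n w)) a @ replicate (snd (nf n w)) b)"
  using assms by (simp add: Lset_def facts_eq_nf nf_canonical)

lemma half_factorial_B_iff:
  assumes "n \<ge> 2"
  shows "half_factorial_B n \<longleftrightarrow> n = 2"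
proof
  assume "half_factorial_B n"
  then obtain l where l: "Lset n (replicate 0 a @ replicate n b) = {l}"
    unfolding half_factorial_B_def by (meson card_1_singletonE)
  have "1 \<le> qmn n n"
    using qmn_ge_iff[OF assms] assms by simp
  then have "n - (n - 2) * 0 \<in> {l}" and "n - (n - 2) * 1 \<in> {l}"
    unfolding l[symmetric] Lset_canonical[OF assms]
    by (auto intro: image_eqI[where x = 0] image_eqI[where x = 1])
  then show "n = 2" using assms by simp
next
  assume "n = 2"
  then have "Lset n w = {fst (nf n w) + snd (nf n w)}" for w
    using Lset_eq_Lset_canonical[of n w] Lset_canonical[of n] by auto
  then show "half_factorial_B n"
    unfolding half_factorial_B_def by simp
qed

lemma int_Lset_canonical:
  assumes "n \<ge> 2"
  shows "int ` Lset n (replicate k a @ replicate m b) =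
           {int (k + m) - int (qmn m n) * (int n - 2) + (int n - 2) * j | j. 0 \<le> j \<and> j \<le> int (qmn m n)}"
proof -
  let ?q = "qmn m n"
  have "(n - 2) * \<alpha> \<le> k + m" if "\<alpha> \<le> ?q" for \<alpha>
  proof (cases "m = 0")
    case True
    with that show ?thesis by (simp add: qmn_def)
  next
    case False
    with that qmn_ge_iff[OF assms] have "(n - 1) * \<alpha> < m" by simp
    moreover have "(n - 2) * \<alpha> \<le> (n - 1) * \<alpha>" by (rule mult_le_mono1) simp
    ultimately show ?thesis by linarith
  qed
  then have "int ` Lset n (replicate k a @ replicate m b) = (\<lambda>\<alpha>. int (k + m) - (int n - 2) * int \<alpha>) ` {..?q}"
    using assms unfolding Lset_canonical[OF assms] image_image
    by (intro image_cong) (simp_all add: of_nat_diff)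
  also have "\<dots> = (\<lambda>j. int (k + m) - int ?q * (int n - 2) + (int n - 2) * j) ` {0..int ?q}"
  proof -
    have "{0..int ?q} = (\<lambda>\<alpha>. int ?q - int \<alpha>) ` {..?q}"
      by (auto intro!: image_eqI[where x = "nat (int ?q - _)"])
    then show ?thesis
      by (simp add: image_image algebra_simps)
  qed
  finally show ?thesis by auto
qed

section \<open>Catenary degree\<close>

lemma lev_Bstep_le:
  assumes "n \<ge> 2" "Bstep n x y"
  shows "lev x y \<le> n - 1"
  using assms(2)
proof induction
  case (1 u v)
  from assms(1) obtain j where j: "n = Suc (Suc j)"
    by (metis add_2_eq_Suc le_Suc_ex)
  have "(edit1 ^^ Suc j) ((u @ [b]) @ [a] @ v) ((u @ [b]) @ replicate (Suc j) b @ v)"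
    by (rule relpowp_edit1_replace_by_replicate)
  then have "(edit1 ^^ (n - 1)) (u @ [b, a] @ v) (u @ replicate n b @ v)"
    by (simp add: j)
  then show ?case by (rule lev_le)
qed

lemma count_list_b_of_factorization_replicate_b:
  assumes "n \<ge> 2" "nf n z = (0, n)"
  shows "count_list z b = 1 \<or> count_list z b = n"
  using atom_word_cases[of z]
proof (elim disjE exE)
  fix j assume "z = replicate j a"
  with assms show ?thesis by (simp add: nf_replicate_a)
next
  fix j v assume z: "z = replicate j a @ b # v"
  with assms(2) have n: "n = 1 + count_list v b + (n - 1) * count_list v a"
    by (simp add: nf_replicate_a_b_Cons)
  show ?thesis
  proof (cases "count_list v a = 0")
    case True
    with n z show ?thesis by simp
  next
    case False
    then have "(n - 1) * count_list v a \<ge> n - 1" by simp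
    with n assms(1) have "count_list v b = 0" by linarith
    with z show ?thesis by simp
  qed
qed

lemma cat_deg_facts_replicate_b_ge:
  assumes "n \<ge> 2"
  shows "enat (n - 1) \<le> cat_deg lev (facts n (replicate n b))"
  unfolding cat_deg_def
proof (rule Inf_greatest, safe)
  fix N
  let ?Z = "facts n (replicate n b)"
  assume chains: "\<forall>z\<in>?Z. \<forall>z'\<in>?Z. \<exists>zs. zs \<noteq> [] \<and> hd zs = z \<and> last zs = z' \<and> set zs \<subseteq> ?Z \<and>
                   (\<forall>i < length zs - 1. enat (lev (zs ! i) (zs ! Suc i)) \<le> N)"
  have Z: "?Z = {z. nf n z = (0, n)}"
    using assms nf_canonical[of n 0 n] by (simp add: facts_eq_nf)
  have "[b, a] \<in> ?Z" and "replicate n b \<in> ?Z"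
    using assms nf_canonical[of n 0 n] unfolding Z by simp_all
  with chains obtain zs where zs: "zs \<noteq> []" "hd zs = [b, a]" "last zs = replicate n b"
      "set zs \<subseteq> ?Z" "\<forall>i < length zs - 1. enat (lev (zs ! i) (zs ! Suc i)) \<le> N"
    by blast
  \<comment> \<open>Along the chain the number of \<open>b\<close>'s jumps from 1 to \<open>n\<close> in a single step.\<close>
  obtain i where i: "i < length zs - 1" "count_list (zs ! i) b = 1" "count_list (zs ! Suc i) b \<noteq> 1"
    using ex_nth_in_nth_Suc_notin[of zs "{z. count_list z b = 1}"] zs(1-3) assms by auto
  then have "zs ! Suc i \<in> ?Z"
    using zs(4) by (auto simp: subset_iff)
  then have "count_list (zs ! Suc i) b = n"
    using count_list_b_of_factorization_replicate_b[OF assms] i(3) Z by blast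
  then have "n - 1 \<le> lev (zs ! i) (zs ! Suc i)"
    using count_list_le_lev[of "zs ! Suc i" b "zs ! i"] i(2) by simp
  with zs(5) i(1) show "enat (n - 1) \<le> N"
    by (meson enat_ord_simps(1) order_trans)
qed

lemma cat_deg_B_eq:
  assumes "n \<ge> 2"
  shows "cat_deg_B n = enat (n - 1)"
  unfolding cat_deg_B_def
proof (rule antisym)
  have "cat_deg lev (facts n w) \<le> enat (n - 1)" for w
    unfolding facts_def Bequiv_eq_equivclp
    using lev_Bstep_le[OF assms] lev_commute by (rule cat_deg_equivclp_class_le)
  then show "(SUP w. cat_deg lev (facts n w)) \<le> enat (n - 1)"
    by (rule SUP_least)
  show "enat (n - 1) \<le> (SUP w. cat_deg lev (facts n w))"
    using cat_deg_facts_replicate_b_ge[OF assms] by (meson UNIV_I SUP_upper order_trans)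
qed

theorem theorem4p1:
  fixes n :: nat
  assumes "n \<ge> 2"
  shows "cat_deg_B n = enat (n - 1) \<and>
         (half_factorial_B n \<longleftrightarrow> n = 2) \<and>
         (\<forall>k m. int ` Lset n (replicate k a @ replicate m b) =
           {int (k + m) - int (qmn m n) * (int n - 2) + (int n - 2) * j | j. 0 \<le> j \<and> j \<le> int (qmn m n)})"
  using cat_deg_B_eq[OF assms] half_factorial_B_iff[OF assms] int_Lset_canonical[OF assms]
  by blast

end
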